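(* Let $[\mathcal{F}],[\mathcal{E}]$ be two $\mathrm{PGL}(4)$-classes of tetrahedra of flags that are $(\sigma,\tau)$-glueable, and let $\mathcal{G}=\{[(\mathcal{F}',\mathcal{E}')]\in\mathcal{FL}_{\sigma,\tau}:\mathcal{F}'\in[\mathcal{F}],\ \mathcal{E}'\in[\mathcal{E}]\}$. Then the gluing parameter $g_\sigma^\tau$ restricted to $\mathcal{G}$ is a homeomorphism $\mathcal{G}\to\mathbb{R}^\times$.
   Context: Flags: $(V,\eta)$ with $\eta$ a plane of $\mathbb{RP}^3$ through $V$. Tetrahedron of flags: non-degenerate ($\eta_i(V_j)=0\iff i=j$) ordered quadruple $(V_m,\eta_m)_{m=1}^4$, $V_m$ not coplanar, with some projective tetrahedron with vertices $V_m$ whose interior misses all $\eta_m$. Edge-faces $\sigma=(ij)k$ are even permutations $[ijkl]$ of $\{1,2,3,4\}$. $\mathcal{F}=(V_m,\eta_m)$ and $\mathcal{E}=(W_m,\zeta_m)$ are glued along $(\sigma,\tau)$, $\sigma=(ij)k$ ($=[ijkl]$), $\tau=(i'j')k'$ ($=[i'j'k'l']$), if $(V_i,\eta_i)=(W_{j'},\zeta_{j'})$, $(V_j,\eta_j)=(W_{i'},\zeta_{i'})$, $(V_k,\eta_k)=(W_{k'},\zeta_{k'})$; classes are $(\sigma,\tau)$-glueable if they have such representatives. $\mathrm{FL}_{\sigma,\tau}$ is the set of pairs glued along $(\sigma,\tau)$ and $\mathcal{FL}_{\sigma,\tau}$ its quotient by diagonal $\mathrm{PGL}(4)$ (quotient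 topology). The gluing parameter of $(\mathcal{F},\mathcal{E})\in\mathrm{FL}_{\sigma,\tau}$ is $g^{\mathcal{E},\tau}_{\mathcal{F},\sigma}=-\frac{\bar\eta_i(\bar V_l)\,\bar\eta_j(\bar V_k)\,\bar\eta_{ijk}(\bar W_{l'})}{\bar\eta_i(\bar V_k)\,\bar\eta_j(\bar W_{l'})\,\bar\eta_{ijk}(\bar V_l)}$, where $\eta_{ijk}$ is the plane spanned by $V_i,V_j,V_k$ and bars denote representatives in $\mathbb{R}^4$, $(\mathbb{R}^4)^*$; it is $\mathrm{PGL}(4)$-invariant and defines $g_\sigma^\tau:\mathcal{FL}_{\sigma,\tau}\to\mathbb{R}^\times$. *)

theory Defs
  imports "HOL-Analysis.Analysis" "HOL-Combinatorics.Permutations"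
begin

text \<open>Points of RP^3 and planes of RP^3 are represented by nonzero vectors of
  real^4 (covectors are identified with vectors via the inner product).
  A tetrahedron of flags is represented by a pair (V, H) of 4x4 arrays:
  V $ m is a representative of the vertex V_m, H $ m of the plane eta_m.
  The four labels 1..4 are the four elements 1, 2, 3, 4 (= 0) of type 4.\<close>

type_synonym tet = "(real^4^4) \<times> (real^4^4)"

definition proj_eq :: "real^4 \<Rightarrow> real^4 \<Rightarrow> bool" where
  "proj_eq u v \<longleftrightarrow> (\<exists>a. a \<noteq> 0 \<and> u = a *\<^sub>R v)"

definition is_flag :: "real^4 \<Rightarrow> real^4 \<Rightarrow> bool" where
  "is_flag v h \<longleftrightarrow> v \<noteq> 0 \<and> h \<noteq> 0 \<and> h \<bullet> v = 0"

definition tetrahedron_of_flags :: "tet \<Rightarrow> bool" where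
  "tetrahedron_of_flags T \<longleftrightarrow>
     (let V = fst T; H = snd T in
       (\<forall>m. is_flag (V $ m) (H $ m)) \<and>
       (\<forall>i j. H $ i \<bullet> V $ j = 0 \<longleftrightarrow> i = j) \<and>
       \<not> (\<exists>f::real^4. f \<noteq> 0 \<and> (\<forall>m. f \<bullet> V $ m = 0)) \<and>
       (\<exists>s::4 \<Rightarrow> real. (\<forall>m. s m = 1 \<or> s m = -1) \<and>
          (\<forall>k (t::4 \<Rightarrow> real). (\<forall>m. t m > 0) \<longrightarrow>
              H $ k \<bullet> (\<Sum>m\<in>UNIV. (t m * s m) *\<^sub>R V $ m) \<noteq> 0)))"

definition pgl_act :: "real^4^4 \<Rightarrow> tet \<Rightarrow> tet" where
  "pgl_act A T = ((\<chi> m. A *v (fst T $ m)), (\<chi> m. (snd T $ m) v* matrix_inv A))"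

definition same_flags :: "tet \<Rightarrow> tet \<Rightarrow> bool" where
  "same_flags T T' \<longleftrightarrow>
     (\<forall>m. proj_eq (fst T $ m) (fst T' $ m) \<and> proj_eq (snd T $ m) (snd T' $ m))"

definition pgl_equiv :: "tet \<Rightarrow> tet \<Rightarrow> bool" where
  "pgl_equiv T T' \<longleftrightarrow> (\<exists>A. invertible A \<and> same_flags T' (pgl_act A T))"

definition pgl_equiv2 :: "tet \<times> tet \<Rightarrow> tet \<times> tet \<Rightarrow> bool" where
  "pgl_equiv2 x y \<longleftrightarrow> (\<exists>A. invertible A \<and>
      same_flags (fst y) (pgl_act A (fst x)) \<and> same_flags (snd y) (pgl_act A (snd x)))"

text \<open>Edge-faces: even permutations [ijkl], i.e. p 1 = i, p 2 = j, p 3 = k, p 4 = l.\<close>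
definition edge_face :: "(4 \<Rightarrow> 4) \<Rightarrow> bool" where
  "edge_face p \<longleftrightarrow> p permutes UNIV \<and> evenperm p"

definition glued :: "(4 \<Rightarrow> 4) \<Rightarrow> (4 \<Rightarrow> 4) \<Rightarrow> tet \<Rightarrow> tet \<Rightarrow> bool" where
  "glued p q F E \<longleftrightarrow>
     proj_eq (fst F $ p 1) (fst E $ q 2) \<and> proj_eq (snd F $ p 1) (snd E $ q 2) \<and>
     proj_eq (fst F $ p 2) (fst E $ q 1) \<and> proj_eq (snd F $ p 2) (snd E $ q 1) \<and>
     proj_eq (fst F $ p 3) (fst E $ q 3) \<and> proj_eq (snd F $ p 3) (snd E $ q 3)"

definition FL_rep :: "(4 \<Rightarrow> 4) \<Rightarrow> (4 \<Rightarrow> 4) \<Rightarrow> (tet \<times> tet) set" where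
  "FL_rep p q = {(F, E). tetrahedron_of_flags F \<and> tetrahedron_of_flags E \<and> glued p q F E}"

definition FL_rel :: "(4 \<Rightarrow> 4) \<Rightarrow> (4 \<Rightarrow> 4) \<Rightarrow> ((tet \<times> tet) \<times> (tet \<times> tet)) set" where
  "FL_rel p q = {(x, y). x \<in> FL_rep p q \<and> y \<in> FL_rep p q \<and> pgl_equiv2 x y}"

definition quotient_top :: "'a topology \<Rightarrow> ('a \<times> 'a) set \<Rightarrow> 'a set topology" where
  "quotient_top X r = topology (\<lambda>U. U \<subseteq> topspace X // r \<and> openin X (\<Union>U))"

definition FLq :: "(4 \<Rightarrow> 4) \<Rightarrow> (4 \<Rightarrow> 4) \<Rightarrow> (tet \<times> tet) set topology" where
  "FLq p q = quotient_top (subtopology euclidean (FL_rep p q)) (FL_rel p q)"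

definition plane_cov :: "real^4 \<Rightarrow> real^4 \<Rightarrow> real^4 \<Rightarrow> real^4" where
  "plane_cov a b c = (SOME f. f \<noteq> 0 \<and> f \<bullet> a = 0 \<and> f \<bullet> b = 0 \<and> f \<bullet> c = 0)"

definition gpar :: "(4 \<Rightarrow> 4) \<Rightarrow> (4 \<Rightarrow> 4) \<Rightarrow> tet \<times> tet \<Rightarrow> real" where
  "gpar p q x =
     (let V = fst (fst x); H = snd (fst x); W = fst (snd x);
          i = p 1; j = p 2; k = p 3; l = p 4; l' = q 4;
          N = plane_cov (V $ i) (V $ j) (V $ k)
      in - ((H $ i \<bullet> V $ l) * (H $ j \<bullet> V $ k) * (N \<bullet> W $ l')) /
           ((H $ i \<bullet> V $ k) * (H $ j \<bullet> W $ l') * (N \<bullet> V $ l)))"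

definition gluing_param :: "(4 \<Rightarrow> 4) \<Rightarrow> (4 \<Rightarrow> 4) \<Rightarrow> (tet \<times> tet) set \<Rightarrow> real" where
  "gluing_param p q c = the_elem (gpar p q ` c)"

definition Gset :: "(4 \<Rightarrow> 4) \<Rightarrow> (4 \<Rightarrow> 4) \<Rightarrow> tet \<Rightarrow> tet \<Rightarrow> (tet \<times> tet) set set" where
  "Gset p q F E = {c \<in> FL_rep p q // FL_rel p q.
      \<exists>x\<in>c. pgl_equiv F (fst x) \<and> pgl_equiv E (snd x)}"

end

theory Submission
  imports Defs
begin

text \<open>The gluing parameter is invariant under the diagonal action, so it descends to the quotient,
  and it is continuous there because the normal of the face \<open>ijk\<close> may be taken to be the cofactor
  vector of its three vertices. Fix a glued pair \<open>(F0, E0)\<close> representing the two classes. The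
  homology with axis the plane \<open>V_i V_j V_k\<close> of \<open>F0\<close> and centre the point
  \<open>\<eta>_i \<inter> \<eta>_j \<inter> \<eta>_k\<close> fixes the three shared flags and multiplies the gluing parameter by its
  ratio \<open>d\<close>; applying it to \<open>E0\<close> gives a continuous section over \<open>\<real>\<^sup>\<times>\<close>. Conversely,
  a matrix relating two elements of \<open>G\<close> with the same first tetrahedron fixes the three shared
  flags, hence is a scalar multiple of such a homology, and equality of the gluing parameters forces
  its ratio to be \<open>1\<close>; so the section is onto \<open>G\<close>.\<close>

section \<open>Projective equality and the action of PGL(4)\<close>

lemma proj_eq_refl: "proj_eq v v"
  unfolding proj_eq_def by (rule exI[of _ 1]) simp

lemma proj_eq_sym: "proj_eq u v \<Longrightarrow> proj_eq v u"
  unfolding proj_eq_def by (metis inverse_nonzero_iff_nonzero left_inverse scaleR_one scaleR_scaleR)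

lemma proj_eq_trans: "proj_eq u v \<Longrightarrow> proj_eq v w \<Longrightarrow> proj_eq u w"
  unfolding proj_eq_def by (metis mult_eq_0_iff scaleR_scaleR)

lemma proj_eq_scaleR: "a \<noteq> 0 \<Longrightarrow> proj_eq (a *\<^sub>R u) u"
  unfolding proj_eq_def by blast

lemma proj_eq_matrix_vector_mult: "proj_eq u v \<Longrightarrow> proj_eq (A *v u) (A *v v)"
  unfolding proj_eq_def by (metis matrix_vector_mult_scaleR)

lemma proj_eq_vector_matrix_mult: "proj_eq u v \<Longrightarrow> proj_eq (u v* A) (v v* A)"
  unfolding proj_eq_def by (metis scaleR_vector_matrix_assoc)

lemma proj_eq_inner_left_eq_0: "proj_eq u v \<Longrightarrow> u \<bullet> w = 0 \<longleftrightarrow> v \<bullet> w = 0"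
  unfolding proj_eq_def by auto

lemma proj_eq_inner_right_eq_0: "proj_eq u v \<Longrightarrow> w \<bullet> u = 0 \<longleftrightarrow> w \<bullet> v = 0"
  unfolding proj_eq_def by auto

lemma matrix_mul_matrix_inv:
  fixes A :: "'a::semiring_1^'n^'m"
  assumes "invertible A"
  shows "A ** matrix_inv A = mat 1" "matrix_inv A ** A = mat 1"
  using someI_ex[OF assms[unfolded invertible_def]] unfolding matrix_inv_def by auto

lemma matrix_inv_unique:
  fixes A B :: "'a::semiring_1^'n^'n"
  assumes "A ** B = mat 1" "B ** A = mat 1"
  shows "matrix_inv A = B"
proof -
  have "invertible A"
    using assms unfolding invertible_def by blast
  then have "matrix_inv A = (B ** A) ** matrix_inv A"
    using assms by simp
  also have "\<dots> = B"
    using matrix_mul_matrix_inv(1)[OF \<open>invertible A\<close>] by (simp add: matrix_mul_assoc[symmetric])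
  finally show ?thesis .
qed

lemma invertible_matrix_inv:
  fixes A :: "'a::semiring_1^'n^'m"
  shows "invertible A \<Longrightarrow> invertible (matrix_inv A)"
  using matrix_mul_matrix_inv unfolding invertible_def by blast

lemma matrix_inv_matrix_inv:
  fixes A :: "'a::semiring_1^'n^'n"
  shows "invertible A \<Longrightarrow> matrix_inv (matrix_inv A) = A"
  using matrix_mul_matrix_inv matrix_inv_unique by blast

lemma matrix_inv_mult:
  fixes A B :: "'a::semiring_1^'n^'n"
  assumes "invertible A" "invertible B"
  shows "matrix_inv (A ** B) = matrix_inv B ** matrix_inv A"
  by (rule matrix_inv_unique)
    (use matrix_mul_matrix_inv[OF assms(1)] matrix_mul_matrix_inv[OF assms(2)] in \<open>metis matrix_mul_assoc matrix_mul_rid\<close>)+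

lemma invertible_mat_1: "invertible (mat 1 :: 'a::semiring_1^'n^'n)"
  unfolding invertible_def by (rule exI[of _ "mat 1"]) simp

lemma matrix_inv_mat_1: "matrix_inv (mat 1 :: 'a::semiring_1^'n^'n) = mat 1"
  by (rule matrix_inv_unique) simp_all

lemma vector_matrix_mult_eq_0_iff:
  fixes A :: "real^'n^'n"
  assumes "invertible A"
  shows "h v* A = 0 \<longleftrightarrow> h = 0"
proof -
  have "(h v* A) v* matrix_inv A = h"
    by (simp add: vector_matrix_mul_assoc matrix_mul_matrix_inv[OF assms])
  then show ?thesis
    by (metis vector_matrix_mult_0)
qed

lemma inner_matrix_inv_action:
  fixes A :: "real^'n^'n"
  shows "invertible A \<Longrightarrow> (h v* matrix_inv A) \<bullet> (A *v v) = h \<bullet> v"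
  by (simp add: dot_lmul_matrix matrix_vector_mul_assoc matrix_mul_matrix_inv)

lemma same_flags_pgl_act_iff:
  "same_flags T' (pgl_act A T) \<longleftrightarrow>
    (\<forall>m. proj_eq (fst T' $ m) (A *v fst T $ m) \<and> proj_eq (snd T' $ m) (snd T $ m v* matrix_inv A))"
  by (simp add: same_flags_def pgl_act_def)

lemma pgl_act_mat_1: "pgl_act (mat 1) T = T"
  by (simp add: pgl_act_def matrix_inv_mat_1)

lemma same_flags_refl: "same_flags T T"
  by (simp add: same_flags_def proj_eq_refl)

lemma same_flags_pgl_act_compose:
  assumes A: "invertible A" and B: "invertible B"
    and T1: "same_flags T1 (pgl_act A T)" and T2: "same_flags T2 (pgl_act B T1)"
  shows "same_flags T2 (pgl_act (B ** A) T)"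
  unfolding same_flags_pgl_act_iff
proof
  fix m
  have 1: "proj_eq (fst T1 $ m) (A *v fst T $ m)" "proj_eq (snd T1 $ m) (snd T $ m v* matrix_inv A)"
    using T1 unfolding same_flags_pgl_act_iff by auto
  have 2: "proj_eq (fst T2 $ m) (B *v fst T1 $ m)" "proj_eq (snd T2 $ m) (snd T1 $ m v* matrix_inv B)"
    using T2 unfolding same_flags_pgl_act_iff by auto
  show "proj_eq (fst T2 $ m) ((B ** A) *v fst T $ m) \<and>
      proj_eq (snd T2 $ m) (snd T $ m v* matrix_inv (B ** A))"
    using proj_eq_trans[OF 2(1) proj_eq_matrix_vector_mult[OF 1(1)]]
      proj_eq_trans[OF 2(2) proj_eq_vector_matrix_mult[OF 1(2)]]
    by (simp add: matrix_vector_mul_assoc vector_matrix_mul_assoc matrix_inv_mult A B)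
qed

lemma same_flags_pgl_act_inverse:
  assumes A: "invertible A" and T': "same_flags T' (pgl_act A T)"
  shows "same_flags T (pgl_act (matrix_inv A) T')"
  unfolding same_flags_pgl_act_iff
proof
  fix m
  have "proj_eq (fst T' $ m) (A *v fst T $ m)" "proj_eq (snd T' $ m) (snd T $ m v* matrix_inv A)"
    using T' unfolding same_flags_pgl_act_iff by auto
  then have "proj_eq (matrix_inv A *v fst T' $ m) (fst T $ m)"
    "proj_eq (snd T' $ m v* A) (snd T $ m)"
    using proj_eq_matrix_vector_mult[of _ _ "matrix_inv A"] proj_eq_vector_matrix_mult[of _ _ A]
    by (force simp: matrix_vector_mul_assoc vector_matrix_mul_assoc matrix_mul_matrix_inv[OF A])+
  then show "proj_eq (fst T $ m) (matrix_inv A *v fst T' $ m) \<and>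
      proj_eq (snd T $ m) (snd T' $ m v* matrix_inv (matrix_inv A))"
    by (simp add: proj_eq_sym matrix_inv_matrix_inv[OF A])
qed

lemma pgl_equiv_refl: "pgl_equiv T T"
  unfolding pgl_equiv_def using pgl_act_mat_1 same_flags_refl invertible_mat_1 by metis

lemma pgl_equiv_sym: "pgl_equiv T T' \<Longrightarrow> pgl_equiv T' T"
  unfolding pgl_equiv_def using same_flags_pgl_act_inverse invertible_matrix_inv by blast

lemma pgl_equiv_trans: "pgl_equiv T T1 \<Longrightarrow> pgl_equiv T1 T2 \<Longrightarrow> pgl_equiv T T2"
  unfolding pgl_equiv_def using same_flags_pgl_act_compose invertible_mult by blast

lemma pgl_equiv2_refl: "pgl_equiv2 x x"
  unfolding pgl_equiv2_def using pgl_act_mat_1 same_flags_refl invertible_mat_1 by metis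

lemma pgl_equiv2_sym: "pgl_equiv2 x y \<Longrightarrow> pgl_equiv2 y x"
  unfolding pgl_equiv2_def using same_flags_pgl_act_inverse invertible_matrix_inv by blast

lemma pgl_equiv2_trans: "pgl_equiv2 x y \<Longrightarrow> pgl_equiv2 y z \<Longrightarrow> pgl_equiv2 x z"
  unfolding pgl_equiv2_def using same_flags_pgl_act_compose invertible_mult by meson

lemma same_flags_pgl_actE:
  assumes "same_flags T' (pgl_act A T)"
  obtains a b where "\<And>m. a m \<noteq> 0" "\<And>m. b m \<noteq> 0"
    "\<And>m. fst T' $ m = a m *\<^sub>R (A *v fst T $ m)"
    "\<And>m. snd T' $ m = b m *\<^sub>R (snd T $ m v* matrix_inv A)"
proof -
  have "\<forall>m. \<exists>a. a \<noteq> 0 \<and> fst T' $ m = a *\<^sub>R (A *v fst T $ m)"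
       "\<forall>m. \<exists>b. b \<noteq> 0 \<and> snd T' $ m = b *\<^sub>R (snd T $ m v* matrix_inv A)"
    using assms unfolding same_flags_pgl_act_iff proj_eq_def by blast+
  then show ?thesis
    using that by metis
qed

lemma permutes_4_all:
  fixes p :: "4 \<Rightarrow> 4"
  assumes "p permutes UNIV"
  shows "(\<forall>m. P m) \<longleftrightarrow> P (p 1) \<and> P (p 2) \<and> P (p 3) \<and> P (p 4)"
  by (metis assms exhaust_4 permutes_surj surjD)

lemma permutes_4_sum:
  fixes p :: "4 \<Rightarrow> 4"
  assumes "p permutes UNIV"
  shows "(\<Sum>m\<in>UNIV. f m) = f (p 1) + f (p 2) + f (p 3) + f (p 4)"
  using sum.permute[OF assms, of f] by (simp add: sum_4)

lemma permutes_eq_iff: "p permutes UNIV \<Longrightarrow> p x = p y \<longleftrightarrow> x = y"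
  by (meson injD permutes_inj)

section \<open>Tetrahedra of flags\<close>

lemma tetrahedron_inner_eq_0_iff:
  "tetrahedron_of_flags T \<Longrightarrow> snd T $ i \<bullet> fst T $ j = 0 \<longleftrightarrow> i = j"
  unfolding tetrahedron_of_flags_def Let_def by blast

lemma tetrahedron_annihilator_eq_0:
  "tetrahedron_of_flags T \<Longrightarrow> (\<forall>m. f \<bullet> fst T $ m = 0) \<Longrightarrow> f = 0"
  unfolding tetrahedron_of_flags_def Let_def by blast

lemma tetrahedron_signs:
  assumes "tetrahedron_of_flags T"
  obtains s where "\<forall>m. s m = 1 \<or> s m = -1"
    "\<And>k t. \<forall>m. t m > 0 \<Longrightarrow> (\<Sum>m\<in>UNIV. t m * s m * (snd T $ k \<bullet> fst T $ m)) \<noteq> 0"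
  using assms unfolding tetrahedron_of_flags_def Let_def
  by (auto simp: inner_sum_right mult.assoc)

lemma tetrahedron_of_flagsI:
  assumes inner_eq_0: "\<And>i j. snd T $ i \<bullet> fst T $ j = 0 \<longleftrightarrow> i = j"
    and annihilator: "\<And>f. \<forall>m. f \<bullet> fst T $ m = 0 \<Longrightarrow> f = 0"
    and signs: "\<forall>m. s m = 1 \<or> s m = -1"
      "\<And>k t. \<forall>m. t m > 0 \<Longrightarrow> (\<Sum>m\<in>UNIV. t m * s m * (snd T $ k \<bullet> fst T $ m)) \<noteq> 0"
  shows "tetrahedron_of_flags T"
proof -
  have "fst T $ m \<noteq> 0 \<and> snd T $ m \<noteq> 0" for m
    using inner_eq_0[of m "m + 1"] inner_eq_0[of "m + 1" m] by auto
  then show ?thesis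
    unfolding tetrahedron_of_flags_def Let_def is_flag_def
    using inner_eq_0 annihilator signs by (auto simp: inner_sum_right mult.assoc intro!: exI[of _ s])
qed

lemma tetrahedron_of_flags_pgl_act:
  assumes T: "tetrahedron_of_flags T" and A: "invertible A" and T': "same_flags T' (pgl_act A T)"
  shows "tetrahedron_of_flags T'"
proof -
  obtain a b where ab: "\<And>m. a m \<noteq> 0" "\<And>m. b m \<noteq> 0"
    "\<And>m. fst T' $ m = a m *\<^sub>R (A *v fst T $ m)"
    "\<And>m. snd T' $ m = b m *\<^sub>R (snd T $ m v* matrix_inv A)"
    using same_flags_pgl_actE[OF T'] by blast
  have inner': "snd T' $ k \<bullet> fst T' $ m = b k * a m * (snd T $ k \<bullet> fst T $ m)" for k m
    using ab(3,4) inner_matrix_inv_action[OF A] by simp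
  obtain s where s: "\<forall>m. s m = 1 \<or> s m = -1"
    "\<And>k t. \<forall>m. t m > 0 \<Longrightarrow> (\<Sum>m\<in>UNIV. t m * s m * (snd T $ k \<bullet> fst T $ m)) \<noteq> 0"
    using tetrahedron_signs[OF T] by blast
  show ?thesis
  proof (rule tetrahedron_of_flagsI[where s = "\<lambda>m. s m * sgn (a m)"])
    show "snd T' $ i \<bullet> fst T' $ j = 0 \<longleftrightarrow> i = j" for i j
      using inner' ab(1,2) tetrahedron_inner_eq_0_iff[OF T] by simp
    show "f = 0" if "\<forall>m. f \<bullet> fst T' $ m = 0" for f
    proof -
      have "\<forall>m. (f v* A) \<bullet> fst T $ m = 0"
        using that ab(1,3) by (simp add: dot_lmul_matrix)
      then show ?thesis
        using tetrahedron_annihilator_eq_0[OF T] vector_matrix_mult_eq_0_iff[OF A] by blast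
    qed
    show "\<forall>m. s m * sgn (a m) = 1 \<or> s m * sgn (a m) = -1"
      using s(1) ab(1) by (auto simp: sgn_real_def)
    show "(\<Sum>m\<in>UNIV. t m * (s m * sgn (a m)) * (snd T' $ k \<bullet> fst T' $ m)) \<noteq> 0"
      if "\<forall>m. t m > 0" for k t
    proof -
      have "(\<Sum>m\<in>UNIV. t m * (s m * sgn (a m)) * (snd T' $ k \<bullet> fst T' $ m))
          = b k * (\<Sum>m\<in>UNIV. (t m * \<bar>a m\<bar>) * s m * (snd T $ k \<bullet> fst T $ m))"
        unfolding inner' sum_distrib_left
        by (intro sum.cong) (auto simp: abs_if sgn_real_def)
      moreover have "(\<Sum>m\<in>UNIV. (t m * \<bar>a m\<bar>) * s m * (snd T $ k \<bullet> fst T $ m)) \<noteq> 0"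
        using s(2)[of "\<lambda>m. t m * \<bar>a m\<bar>"] that ab(1) by auto
      ultimately show ?thesis
        using ab(2) by simp
    qed
  qed
qed

lemma tetrahedron_of_flags_pgl_equiv:
  "tetrahedron_of_flags T \<Longrightarrow> pgl_equiv T T' \<Longrightarrow> tetrahedron_of_flags T'"
  unfolding pgl_equiv_def using tetrahedron_of_flags_pgl_act by blast

lemma positive_combination_eq_0:
  fixes c :: "'a::finite \<Rightarrow> real"
  assumes "c i > 0" "c j < 0"
  obtains t where "\<forall>m. t m > 0" "(\<Sum>m\<in>UNIV. t m * c m) = 0"
proof -
  define P where "P = card {m. c m > 0}"
  define Q where "Q = card {m. c m < 0}"
  have "P > 0" "Q > 0"
    using assms by (auto simp: P_def Q_def card_gt_0_iff)
  define t where "t m = (if c m > 0 then Q / c m else if c m < 0 then - P / c m else 1)" for m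
  have "\<forall>m. t m > 0"
    using \<open>P > 0\<close> \<open>Q > 0\<close> by (simp add: t_def divide_neg_neg divide_pos_neg)
  moreover have "t m * c m = (if c m > 0 then real Q else 0) - (if c m < 0 then real P else 0)" for m
    by (simp add: t_def)
  then have "(\<Sum>m\<in>UNIV. t m * c m) = real Q * real P - real P * real Q"
    by (simp add: sum_subtractf sum.If_cases P_def Q_def Int_def)
  ultimately show ?thesis
    using that by simp
qed

text \<open>If two entries of a row had opposite signs, suitable positive weights would make the
  combination in the sign condition vanish.\<close>
lemma tetrahedron_consistent_signs:
  assumes T: "tetrahedron_of_flags T"
  obtains s where "\<forall>m. s m = 1 \<or> s m = -1"
    "\<And>k m1 m2. m1 \<noteq> k \<Longrightarrow> m2 \<noteq> k \<Longrightarrow>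
       0 < s m1 * (snd T $ k \<bullet> fst T $ m1) * (s m2 * (snd T $ k \<bullet> fst T $ m2))"
proof -
  obtain s where s: "\<forall>m. s m = 1 \<or> s m = -1"
    "\<And>k t. \<forall>m. t m > 0 \<Longrightarrow> (\<Sum>m\<in>UNIV. t m * s m * (snd T $ k \<bullet> fst T $ m)) \<noteq> 0"
    using tetrahedron_signs[OF T] by blast
  have "0 < s m1 * (snd T $ k \<bullet> fst T $ m1) * (s m2 * (snd T $ k \<bullet> fst T $ m2))"
    if "m1 \<noteq> k" "m2 \<noteq> k" for k m1 m2
  proof (rule ccontr)
    define c where "c m = s m * (snd T $ k \<bullet> fst T $ m)" for m
    have "s m \<noteq> 0" for m
      using s(1) by (metis zero_neq_neg_one zero_neq_one)
    then have "c m1 \<noteq> 0" "c m2 \<noteq> 0"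
      using that tetrahedron_inner_eq_0_iff[OF T] by (auto simp: c_def)
    moreover assume "\<not> 0 < s m1 * (snd T $ k \<bullet> fst T $ m1) * (s m2 * (snd T $ k \<bullet> fst T $ m2))"
    ultimately have "c m1 > 0 \<and> c m2 < 0 \<or> c m1 < 0 \<and> c m2 > 0"
      unfolding c_def[symmetric] by (metis linorder_neqE_linordered_idom mult_neg_neg mult_pos_pos)
    then obtain t where "\<forall>m. t m > 0" "(\<Sum>m\<in>UNIV. t m * c m) = 0"
      using positive_combination_eq_0 by metis
    then show False
      using s(2) by (simp add: c_def mult.assoc)
  qed
  then show ?thesis
    using that s(1) by blast
qed

lemma tetrahedron_cyclic_products_sum_nonzero:
  assumes T: "tetrahedron_of_flags T" and distinct: "a \<noteq> b" "b \<noteq> c" "a \<noteq> c"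
  defines "h i j \<equiv> snd T $ i \<bullet> fst T $ j"
  shows "h a b * h b c * h c a + h a c * h b a * h c b \<noteq> 0"
proof -
  obtain s where s: "\<forall>m. s m = 1 \<or> s m = -1"
    "\<And>k m1 m2. m1 \<noteq> k \<Longrightarrow> m2 \<noteq> k \<Longrightarrow> 0 < s m1 * h k m1 * (s m2 * h k m2)"
    using tetrahedron_consistent_signs[OF T] unfolding h_def by blast
  have "s m * s m = 1" for m
    using s(1) by (metis mult_1 mult_minus1 minus_minus)
  then have signs_cancel: "(s b * h a b * (s c * h a c)) * (s a * h b a * (s c * h b c)) *
      (s a * h c a * (s b * h c b)) = (h a b * h b c * h c a) * (h a c * h b a * h c b)"
    by (simp add: ac_simps)
  have "0 < (s b * h a b * (s c * h a c)) * (s a * h b a * (s c * h b c)) * (s a * h c a * (s b * h c b))"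
    using s(2)[of b a c] s(2)[of a b c] s(2)[of a c b] distinct by simp
  then have pos: "0 < (h a b * h b c * h c a) * (h a c * h b a * h c b)"
    unfolding signs_cancel .
  show ?thesis
  proof
    assume "h a b * h b c * h c a + h a c * h b a * h c b = 0"
    then have "(h a b * h b c * h c a) * (h a c * h b a * h c b) = - ((h a b * h b c * h c a) * (h a b * h b c * h c a))"
      by (simp add: eq_neg_iff_add_eq_0[symmetric])
    then show False
      using pos not_square_less_zero by (metis neg_0_less_iff_less)
  qed
qed

lemma invertible_vertex_matrix:
  assumes "tetrahedron_of_flags T"
  shows "invertible (fst T)"
  unfolding invertible_left_inverse matrix_left_invertible_ker
  using tetrahedron_annihilator_eq_0[OF assms]
  by (simp add: vec_eq_iff matrix_vector_mul_component inner_commute)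

lemma tetrahedron_vertex_coordinates:
  assumes "tetrahedron_of_flags T"
  obtains c where "u = (\<Sum>m\<in>UNIV. c m *\<^sub>R fst T $ m)"
proof -
  define M where "M = transpose (fst T)"
  have "invertible M"
    unfolding M_def by (rule transpose_invertible[OF invertible_vertex_matrix[OF assms]])
  then have "u = M *v (matrix_inv M *v u)"
    by (simp add: matrix_vector_mul_assoc matrix_mul_matrix_inv)
  also have "M *v c = (\<Sum>m\<in>UNIV. c $ m *\<^sub>R fst T $ m)" for c
    by (simp add: M_def vec_eq_iff vector_matrix_mult_def mult.commute)
  finally show ?thesis
    using that by blast
qed

section \<open>Normals of a face\<close>

definition face_normal :: "(4 \<Rightarrow> 4) \<Rightarrow> real^4^4 \<Rightarrow> real^4 \<Rightarrow> bool" where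
  "face_normal p V N \<longleftrightarrow> N \<noteq> 0 \<and> N \<bullet> V $ p 1 = 0 \<and> N \<bullet> V $ p 2 = 0 \<and> N \<bullet> V $ p 3 = 0"

lemma exists_orthogonal_3:
  fixes a b c :: "'a::euclidean_space"
  assumes "3 < DIM('a)"
  shows "\<exists>f. f \<noteq> 0 \<and> f \<bullet> a = 0 \<and> f \<bullet> b = 0 \<and> f \<bullet> c = 0"
proof -
  have "card {a, b, c} \<le> 3"
    by (auto simp: card_insert_if)
  then have "dim {a, b, c} < DIM('a)"
    using dim_le_card'[of "{a, b, c}"] assms by simp
  then obtain f where "f \<noteq> 0" "\<And>y. y \<in> span {a, b, c} \<Longrightarrow> orthogonal f y"
    using orthogonal_to_subspace_exists by blast
  then show ?thesis
    by (auto simp: orthogonal_def span_base)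
qed

lemma plane_cov_orthogonal:
  "plane_cov a b c \<noteq> 0 \<and> plane_cov a b c \<bullet> a = 0 \<and> plane_cov a b c \<bullet> b = 0 \<and> plane_cov a b c \<bullet> c = 0"
  unfolding plane_cov_def by (rule someI_ex[OF exists_orthogonal_3]) simp

definition face_plane :: "(4 \<Rightarrow> 4) \<Rightarrow> tet \<Rightarrow> real^4" where
  "face_plane p F = plane_cov (fst F $ p 1) (fst F $ p 2) (fst F $ p 3)"

lemma face_normal_face_plane: "face_normal p (fst F) (face_plane p F)"
  unfolding face_normal_def face_plane_def using plane_cov_orthogonal by blast

lemma face_normal_inner_opposite_nonzero:
  assumes "tetrahedron_of_flags T" "p permutes UNIV" "face_normal p (fst T) N"
  shows "N \<bullet> fst T $ p 4 \<noteq> 0"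
proof
  assume "N \<bullet> fst T $ p 4 = 0"
  then have "\<forall>m. N \<bullet> fst T $ m = 0"
    using assms(3) unfolding permutes_4_all[OF assms(2)] face_normal_def by simp
  then show False
    using assms(1,3) tetrahedron_annihilator_eq_0 unfolding face_normal_def by blast
qed

lemma face_normal_proportional:
  assumes T: "tetrahedron_of_flags T" and p: "p permutes UNIV" and N: "face_normal p (fst T) N"
    and u: "u \<bullet> fst T $ p 1 = 0" "u \<bullet> fst T $ p 2 = 0" "u \<bullet> fst T $ p 3 = 0"
  shows "u = (u \<bullet> fst T $ p 4 / (N \<bullet> fst T $ p 4)) *\<^sub>R N"
proof -
  define r where "r = u \<bullet> fst T $ p 4 / (N \<bullet> fst T $ p 4)"
  have "N \<bullet> fst T $ p 4 \<noteq> 0"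
    using face_normal_inner_opposite_nonzero[OF T p N] .
  then have "(u - r *\<^sub>R N) \<bullet> fst T $ p 4 = 0"
    by (simp add: r_def inner_diff_left)
  moreover have "(u - r *\<^sub>R N) \<bullet> fst T $ p n = 0" if "n \<in> {1, 2, 3}" for n
    using that N u unfolding face_normal_def by (auto simp: inner_diff_left)
  ultimately have "\<forall>m. (u - r *\<^sub>R N) \<bullet> fst T $ m = 0"
    unfolding permutes_4_all[OF p] by simp
  then have "u - r *\<^sub>R N = 0"
    by (rule tetrahedron_annihilator_eq_0[OF T])
  then show ?thesis
    by (simp add: r_def)
qed

lemma face_normal_pgl_act:
  assumes A: "invertible A" and T': "same_flags T' (pgl_act A T)" and N: "face_normal p (fst T) N"
  shows "face_normal p (fst T') (N v* matrix_inv A)"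
proof -
  obtain a b where "\<And>m. a m \<noteq> 0" "\<And>m. b m \<noteq> 0"
    "\<And>m. fst T' $ m = a m *\<^sub>R (A *v fst T $ m)"
    "\<And>m. snd T' $ m = b m *\<^sub>R (snd T $ m v* matrix_inv A)"
    using same_flags_pgl_actE[OF T'] by blast
  moreover have "N v* matrix_inv A \<noteq> 0"
    using N vector_matrix_mult_eq_0_iff[OF invertible_matrix_inv[OF A]] unfolding face_normal_def by blast
  ultimately show ?thesis
    using N unfolding face_normal_def by (simp add: inner_matrix_inv_action[OF A])
qed

lemma zero_diagonal_system_3_trivial:
  fixes h12 h13 h21 h23 h31 h32 x1 x2 x3 :: real
  assumes "h12 \<noteq> 0" "h21 \<noteq> 0" "h12 * h23 * h31 + h13 * h21 * h32 \<noteq> 0"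
    and "x2 * h12 + x3 * h13 = 0" "x1 * h21 + x3 * h23 = 0" "x1 * h31 + x2 * h32 = 0"
  shows "x1 = 0 \<and> x2 = 0 \<and> x3 = 0"
proof -
  have "x3 * (h12 * h23 * h31 + h13 * h21 * h32) =
      (h12 * h31) * (x1 * h21 + x3 * h23) + (h21 * h32) * (x2 * h12 + x3 * h13)
      - (h12 * h21) * (x1 * h31 + x2 * h32)"
    by (simp add: algebra_simps)
  then have "x3 = 0"
    using assms(3-) by simp
  then show ?thesis
    using assms by auto
qed

lemma face_dual_annihilator_eq_0:
  assumes T: "tetrahedron_of_flags T" and p: "p permutes UNIV" and N: "face_normal p (fst T) N"
    and u: "N \<bullet> u = 0" "snd T $ p 1 \<bullet> u = 0" "snd T $ p 2 \<bullet> u = 0" "snd T $ p 3 \<bullet> u = 0"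
  shows "u = 0"
proof -
  define h where "h i j = snd T $ i \<bullet> fst T $ j" for i j
  have h: "h i j = 0 \<longleftrightarrow> i = j" for i j
    using tetrahedron_inner_eq_0_iff[OF T] by (simp add: h_def)
  have distinct: "p 1 \<noteq> p 2" "p 2 \<noteq> p 3" "p 1 \<noteq> p 3" "p 2 \<noteq> p 1"
    by (simp_all add: permutes_eq_iff[OF p])
  obtain c where c: "u = (\<Sum>m\<in>UNIV. c m *\<^sub>R fst T $ m)"
    using T by (rule tetrahedron_vertex_coordinates)
  then have u4: "u = c (p 1) *\<^sub>R fst T $ p 1 + c (p 2) *\<^sub>R fst T $ p 2 + c (p 3) *\<^sub>R fst T $ p 3
      + c (p 4) *\<^sub>R fst T $ p 4"
    by (simp add: permutes_4_sum[OF p])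
  have "c (p 4) * (N \<bullet> fst T $ p 4) = 0"
    using N u(1) unfolding u4 face_normal_def by (simp add: inner_add_right)
  then have c4: "c (p 4) = 0"
    using face_normal_inner_opposite_nonzero[OF T p N] by simp
  have "c (p 1) = 0 \<and> c (p 2) = 0 \<and> c (p 3) = 0"
  proof (rule zero_diagonal_system_3_trivial)
    show "h (p 1) (p 2) \<noteq> 0" "h (p 2) (p 1) \<noteq> 0"
      using h distinct by auto
    show "h (p 1) (p 2) * h (p 2) (p 3) * h (p 3) (p 1) + h (p 1) (p 3) * h (p 2) (p 1) * h (p 3) (p 2) \<noteq> 0"
      unfolding h_def using tetrahedron_cyclic_products_sum_nonzero[OF T distinct(1-3)] .
    show "c (p 2) * h (p 1) (p 2) + c (p 3) * h (p 1) (p 3) = 0"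
      "c (p 1) * h (p 2) (p 1) + c (p 3) * h (p 2) (p 3) = 0"
      "c (p 1) * h (p 3) (p 1) + c (p 2) * h (p 3) (p 2) = 0"
      using u(2-4) h[of "p 1" "p 1"] h[of "p 2" "p 2"] h[of "p 3" "p 3"] unfolding u4 c4 h_def
      by (simp_all add: inner_add_right)
  qed
  then show ?thesis
    using u4 c4 by simp
qed

section \<open>The gluing parameter\<close>

definition glue_ratio :: "(4 \<Rightarrow> 4) \<Rightarrow> tet \<Rightarrow> real^4 \<Rightarrow> real^4 \<Rightarrow> real" where
  "glue_ratio p F N U =
     (let V = fst F; H = snd F
      in - ((H $ p 1 \<bullet> V $ p 4) * (H $ p 2 \<bullet> V $ p 3) * (N \<bullet> U)) /
           ((H $ p 1 \<bullet> V $ p 3) * (H $ p 2 \<bullet> U) * (N \<bullet> V $ p 4)))"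

lemma glue_ratio_scaleR_normal:
  assumes "r \<noteq> 0"
  shows "glue_ratio p F (r *\<^sub>R N) U = glue_ratio p F N U"
proof -
  have "- (a * b * (r * x)) / (c * d * (r * y)) = - (a * b * x) / (c * d * y)" for a b c d x y :: real
    using mult_divide_mult_cancel_left[OF assms, of "- (a * b * x)" "c * d * y"] by (simp add: ac_simps)
  then show ?thesis
    by (simp add: glue_ratio_def Let_def)
qed

lemma glue_ratio_pgl_act:
  assumes A: "invertible A" and F': "same_flags F' (pgl_act A F)" and c: "c \<noteq> 0"
  shows "glue_ratio p F' (N v* matrix_inv A) (c *\<^sub>R (A *v U)) = glue_ratio p F N U"
proof -
  obtain a b where a: "\<And>m. a m \<noteq> 0" "\<And>m. fst F' $ m = a m *\<^sub>R (A *v fst F $ m)"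
    and b: "\<And>m. b m \<noteq> 0" "\<And>m. snd F' $ m = b m *\<^sub>R (snd F $ m v* matrix_inv A)"
    using same_flags_pgl_actE[OF F'] by metis
  have inner_F': "snd F' $ i \<bullet> fst F' $ j = b i * a j * (snd F $ i \<bullet> fst F $ j)"
    "snd F' $ i \<bullet> (c *\<^sub>R (A *v U)) = b i * c * (snd F $ i \<bullet> U)"
    "(N v* matrix_inv A) \<bullet> (c *\<^sub>R (A *v U)) = c * (N \<bullet> U)"
    "(N v* matrix_inv A) \<bullet> fst F' $ j = a j * (N \<bullet> fst F $ j)" for i j
    by (simp_all add: a(2) b(2) inner_matrix_inv_action[OF A])
  define K where "K = b (p 1) * a (p 4) * b (p 2) * a (p 3) * c"
  have "K \<noteq> 0"
    using a(1) b(1) c by (simp add: K_def)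
  have "- ((b (p 1) * a (p 4) * x1) * (b (p 2) * a (p 3) * x2) * (c * x3)) /
      ((b (p 1) * a (p 3) * y1) * (b (p 2) * c * y2) * (a (p 4) * y3))
      = - (x1 * x2 * x3) / (y1 * y2 * y3)" for x1 x2 x3 y1 y2 y3
  proof -
    have "- ((b (p 1) * a (p 4) * x1) * (b (p 2) * a (p 3) * x2) * (c * x3)) /
        ((b (p 1) * a (p 3) * y1) * (b (p 2) * c * y2) * (a (p 4) * y3))
        = (K * - (x1 * x2 * x3)) / (K * (y1 * y2 * y3))"
      by (simp add: K_def ac_simps)
    then show ?thesis
      using \<open>K \<noteq> 0\<close> by simp
  qed
  then show ?thesis
    unfolding glue_ratio_def Let_def inner_F' .
qed

lemma gpar_eq_glue_ratio:
  assumes T: "tetrahedron_of_flags (fst x)" and p: "p permutes UNIV"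
    and N: "face_normal p (fst (fst x)) N"
  shows "gpar p q x = glue_ratio p (fst x) N (fst (snd x) $ q 4)"
proof -
  define V where "V = fst (fst x)"
  define N0 where "N0 = face_plane p (fst x)"
  have N0: "face_normal p V N0"
    unfolding N0_def V_def by (rule face_normal_face_plane)
  then have "N0 = (N0 \<bullet> V $ p 4 / (N \<bullet> V $ p 4)) *\<^sub>R N"
    using face_normal_proportional[OF T p N] unfolding face_normal_def V_def by blast
  moreover have "N0 \<bullet> V $ p 4 / (N \<bullet> V $ p 4) \<noteq> 0"
    using face_normal_inner_opposite_nonzero[OF T p] N N0 unfolding V_def by simp
  ultimately have "glue_ratio p (fst x) N0 (fst (snd x) $ q 4) = glue_ratio p (fst x) N (fst (snd x) $ q 4)"
    by (metis glue_ratio_scaleR_normal)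
  then show ?thesis
    by (simp add: gpar_def glue_ratio_def N0_def V_def face_plane_def Let_def)
qed

lemma FL_rep_iff:
  "x \<in> FL_rep p q \<longleftrightarrow>
    tetrahedron_of_flags (fst x) \<and> tetrahedron_of_flags (snd x) \<and> glued p q (fst x) (snd x)"
  by (cases x) (simp add: FL_rep_def)

lemma gpar_pgl_equiv2:
  assumes p: "p permutes UNIV" and x: "x \<in> FL_rep p q" and y: "y \<in> FL_rep p q"
    and "pgl_equiv2 x y"
  shows "gpar p q y = gpar p q x"
proof -
  obtain A where A: "invertible A" "same_flags (fst y) (pgl_act A (fst x))"
    "same_flags (snd y) (pgl_act A (snd x))"
    using \<open>pgl_equiv2 x y\<close> unfolding pgl_equiv2_def by blast
  obtain c d where c: "\<And>m. c m \<noteq> 0" "\<And>m. d m \<noteq> 0"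
    "\<And>m. fst (snd y) $ m = c m *\<^sub>R (A *v fst (snd x) $ m)"
    "\<And>m. snd (snd y) $ m = d m *\<^sub>R (snd (snd x) $ m v* matrix_inv A)"
    using same_flags_pgl_actE[OF A(3)] by blast
  define N where "N = face_plane p (fst x)"
  have N: "face_normal p (fst (fst x)) N"
    unfolding N_def by (rule face_normal_face_plane)
  have "gpar p q y = glue_ratio p (fst y) (N v* matrix_inv A) (fst (snd y) $ q 4)"
    using gpar_eq_glue_ratio face_normal_pgl_act[OF A(1,2) N] x y p by (auto simp: FL_rep_iff)
  also have "\<dots> = glue_ratio p (fst x) N (fst (snd x) $ q 4)"
    unfolding c(3) using glue_ratio_pgl_act[OF A(1,2) c(1)] .
  also have "\<dots> = gpar p q x"
    using gpar_eq_glue_ratio N x p by (simp add: FL_rep_iff)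
  finally show ?thesis .
qed

lemma glued_face_inner_opposite_nonzero:
  assumes p: "p permutes UNIV" and q: "q permutes UNIV" and x: "x \<in> FL_rep p q"
    and N: "face_normal p (fst (fst x)) N"
  shows "N \<bullet> fst (snd x) $ q 4 \<noteq> 0" "snd (fst x) $ p 2 \<bullet> fst (snd x) $ q 4 \<noteq> 0"
proof -
  have TE: "tetrahedron_of_flags (snd x)" and g: "glued p q (fst x) (snd x)"
    using x by (simp_all add: FL_rep_iff)
  have glued: "proj_eq (fst (fst x) $ p 1) (fst (snd x) $ q 2)"
    "proj_eq (fst (fst x) $ p 2) (fst (snd x) $ q 1)" "proj_eq (fst (fst x) $ p 3) (fst (snd x) $ q 3)"
    "proj_eq (snd (fst x) $ p 2) (snd (snd x) $ q 1)"
    using g unfolding glued_def by blast+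
  have "face_normal q (fst (snd x)) N"
    using N proj_eq_inner_right_eq_0[OF glued(1)] proj_eq_inner_right_eq_0[OF glued(2)]
      proj_eq_inner_right_eq_0[OF glued(3)]
    unfolding face_normal_def by simp
  then show "N \<bullet> fst (snd x) $ q 4 \<noteq> 0"
    by (rule face_normal_inner_opposite_nonzero[OF TE q])
  have "snd (snd x) $ q 1 \<bullet> fst (snd x) $ q 4 \<noteq> 0"
    using tetrahedron_inner_eq_0_iff[OF TE] permutes_eq_iff[OF q] by simp
  then show "snd (fst x) $ p 2 \<bullet> fst (snd x) $ q 4 \<noteq> 0"
    using proj_eq_inner_left_eq_0[OF glued(4)] by simp
qed

lemma gpar_nonzero:
  assumes p: "p permutes UNIV" and q: "q permutes UNIV" and x: "x \<in> FL_rep p q"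
  shows "gpar p q x \<noteq> 0"
proof -
  define N where "N = face_plane p (fst x)"
  have T: "tetrahedron_of_flags (fst x)"
    using x by (simp add: FL_rep_iff)
  have N: "face_normal p (fst (fst x)) N"
    unfolding N_def by (rule face_normal_face_plane)
  show ?thesis
    using glued_face_inner_opposite_nonzero[OF p q x N] face_normal_inner_opposite_nonzero[OF T p N]
      tetrahedron_inner_eq_0_iff[OF T] permutes_eq_iff[OF p]
    unfolding gpar_eq_glue_ratio[OF T p N] glue_ratio_def Let_def by simp
qed

section \<open>Quotient topology\<close>

lemma istopology_quotient:
  assumes r: "equiv (topspace X) r"
  shows "istopology (\<lambda>U. U \<subseteq> topspace X // r \<and> openin X (\<Union>U))"
proof -
  have "\<Union>(S \<inter> T) = \<Union>S \<inter> \<Union>T" if "S \<subseteq> topspace X // r" "T \<subseteq> topspace X // r" for S T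
    using that quotient_disj[OF r] by blast
  moreover have "\<Union>(\<Union>K) = (\<Union>U\<in>K. \<Union>U)" for K :: "'a set set set"
    by blast
  ultimately show ?thesis
    unfolding istopology_def by auto
qed

lemma openin_quotient_top:
  assumes "equiv (topspace X) r"
  shows "openin (quotient_top X r) U \<longleftrightarrow> U \<subseteq> topspace X // r \<and> openin X (\<Union>U)"
  unfolding quotient_top_def using topology_inverse'[OF istopology_quotient[OF assms]] by simp

lemma topspace_quotient_top:
  assumes r: "equiv (topspace X) r"
  shows "topspace (quotient_top X r) = topspace X // r"
proof -
  have "openin (quotient_top X r) (topspace X // r)"
    using Union_quotient[OF r] by (simp add: openin_quotient_top[OF r])
  then show ?thesis
    unfolding topspace_def openin_quotient_top[OF r] by blast
qed

lemma quotient_class_eq: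
  assumes r: "equiv A r" and "c \<in> A // r" "x \<in> c"
  shows "c = r `` {x}"
  using assms(2,3) by (elim quotientE) (simp add: equiv_class_eq[OF r])

lemma continuous_map_quotient_class:
  assumes r: "equiv (topspace X) r"
  shows "continuous_map X (quotient_top X r) (\<lambda>x. r `` {x})"
  unfolding continuous_map topspace_quotient_top[OF r]
proof (intro conjI allI impI)
  show "(\<lambda>x. r `` {x}) ` topspace X \<subseteq> topspace X // r"
    by (auto intro: quotientI)
  fix U
  assume "openin (quotient_top X r) U"
  then have U: "U \<subseteq> topspace X // r" "openin X (\<Union>U)"
    by (simp_all add: openin_quotient_top[OF r])
  have "{x \<in> topspace X. r `` {x} \<in> U} = \<Union>U"
  proof (intro subset_antisym subsetI)
    fix x
    assume "x \<in> {x \<in> topspace X. r `` {x} \<in> U}"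
    then show "x \<in> \<Union>U"
      using equiv_class_self[OF r] by blast
  next
    fix x
    assume "x \<in> \<Union>U"
    then obtain c where "c \<in> U" "x \<in> c"
      by blast
    then show "x \<in> {x \<in> topspace X. r `` {x} \<in> U}"
      using U(1) quotient_class_eq[OF r] in_quotient_imp_subset[OF r] by blast
  qed
  then show "openin X {x \<in> topspace X. r `` {x} \<in> U}"
    using U(2) by simp
qed

lemma continuous_map_from_quotient_top:
  assumes r: "equiv (topspace X) r" and f: "continuous_map X Y f"
    and g: "\<And>x. x \<in> topspace X \<Longrightarrow> g (r `` {x}) = f x"
  shows "continuous_map (quotient_top X r) Y g"
  unfolding continuous_map topspace_quotient_top[OF r]
proof (intro conjI allI impI)
  show "g ` (topspace X // r) \<subseteq> topspace Y"
    using f g by (auto elim!: quotientE simp: continuous_map_def)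
  fix U
  assume "openin Y U"
  then have "openin X {x \<in> topspace X. f x \<in> U}"
    using f by (simp add: continuous_map)
  moreover have "\<Union>{c \<in> topspace X // r. g c \<in> U} = {x \<in> topspace X. f x \<in> U}"
  proof (intro subset_antisym subsetI)
    fix x
    assume "x \<in> \<Union>{c \<in> topspace X // r. g c \<in> U}"
    then obtain c where "c \<in> topspace X // r" "g c \<in> U" "x \<in> c"
      by blast
    then show "x \<in> {x \<in> topspace X. f x \<in> U}"
      using g quotient_class_eq[OF r] in_quotient_imp_subset[OF r] by fastforce
  next
    fix x
    assume "x \<in> {x \<in> topspace X. f x \<in> U}"
    then show "x \<in> \<Union>{c \<in> topspace X // r. g c \<in> U}"
      using g quotientI equiv_class_self[OF r] by fastforce
  qed
  ultimately show "openin (quotient_top X r) {c \<in> topspace X // r. g c \<in> U}"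
    by (simp add: openin_quotient_top[OF r])
qed

lemma equiv_FL_rel: "equiv (FL_rep p q) (FL_rel p q)"
  by (rule equivI)
    (auto simp: FL_rel_def refl_on_def sym_def trans_def
      intro: pgl_equiv2_refl pgl_equiv2_sym pgl_equiv2_trans)

lemma topspace_FLq: "topspace (FLq p q) = FL_rep p q // FL_rel p q"
  using topspace_quotient_top[of "top_of_set (FL_rep p q)"] equiv_FL_rel by (simp add: FLq_def)

lemma gluing_param_class:
  assumes p: "p permutes UNIV" and x: "x \<in> FL_rep p q"
  shows "gluing_param p q (FL_rel p q `` {x}) = gpar p q x"
proof -
  have "gpar p q ` (FL_rel p q `` {x}) = {gpar p q x}"
  proof
    show "gpar p q ` (FL_rel p q `` {x}) \<subseteq> {gpar p q x}"
      using gpar_pgl_equiv2[OF p x] by (auto simp: FL_rel_def)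
    show "{gpar p q x} \<subseteq> gpar p q ` (FL_rel p q `` {x})"
      using equiv_class_self[OF equiv_FL_rel x] by blast
  qed
  then show ?thesis
    by (simp add: gluing_param_def)
qed

section \<open>Continuity of the gluing parameter\<close>

text \<open>Pairing with this covector computes the determinant with rows \<open>V i, V j, V k, w\<close>; unlike
  \<open>plane_cov\<close>, which is chosen by Hilbert choice, it depends continuously on the vertices.\<close>
definition cofactor_normal :: "(4 \<Rightarrow> 4) \<Rightarrow> real^4^4 \<Rightarrow> real^4" where
  "cofactor_normal p V = (\<chi> m. det (\<chi> n. if n = 4 then axis m 1 else V $ p n))"

lemma inner_cofactor_normal:
  "cofactor_normal p V \<bullet> w = det (\<chi> n. if n = 4 then w else V $ p n)"
proof -
  have "det (\<chi> n. if n = 4 then w else V $ p n)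
      = det (\<chi> n. if n = 4 then (\<Sum>m\<in>UNIV. w $ m *s axis m 1) else V $ p n)"
    by (simp only: basis_expansion)
  also have "\<dots> = (\<Sum>m\<in>UNIV. det (\<chi> n. if n = 4 then w $ m *s axis m 1 else V $ p n))"
    by (rule det_linear_row_sum) simp
  also have "\<dots> = cofactor_normal p V \<bullet> w"
    by (simp add: cofactor_normal_def inner_vec_def det_row_mul mult.commute)
  finally show ?thesis ..
qed

lemma face_normal_cofactor_normal:
  assumes T: "tetrahedron_of_flags T" and p: "p permutes UNIV"
  shows "face_normal p (fst T) (cofactor_normal p (fst T))"
proof -
  have "(\<chi> n. if n = 4 then fst T $ p 4 else fst T $ p n) = (\<chi> n. fst T $ p n)"
    by (simp add: vec_eq_iff)
  then have "cofactor_normal p (fst T) \<bullet> fst T $ p 4 = of_int (sign p) * det (fst T)"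
    by (simp add: inner_cofactor_normal det_permute_rows[OF p])
  moreover have "det (fst T) \<noteq> 0"
    using invertible_vertex_matrix[OF T] by (simp add: invertible_det_nz)
  moreover have "cofactor_normal p (fst T) \<bullet> fst T $ p n = 0" if "n \<noteq> 4" for n
    unfolding inner_cofactor_normal by (rule det_identical_rows[of 4 n]) (use that in \<open>auto simp: row_def\<close>)
  ultimately show ?thesis
    unfolding face_normal_def by auto
qed

lemma continuous_on_det [continuous_intros]:
  "continuous_on S f \<Longrightarrow> continuous_on S (\<lambda>x. det (f x :: real^'n^'n))"
  unfolding det_def by (intro continuous_intros)

lemma continuous_on_cofactor_normal [continuous_intros]:
  assumes "continuous_on S V"
  shows "continuous_on S (\<lambda>x. cofactor_normal p (V x))"
proof -
  have "continuous_on S (\<lambda>x. if n = 4 then axis m 1 else V x $ p n)" for m n :: 4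
    by (cases "n = 4") (simp_all add: assms continuous_on_component)
  then show ?thesis
    unfolding cofactor_normal_def by (intro continuous_intros)
qed

lemma continuous_on_gpar:
  assumes p: "p permutes UNIV" and q: "q permutes UNIV"
  shows "continuous_on (FL_rep p q) (gpar p q)"
proof -
  have face_normal: "face_normal p (fst (fst x)) (cofactor_normal p (fst (fst x)))"
    if "x \<in> FL_rep p q" for x
    using face_normal_cofactor_normal[OF _ p] that by (simp add: FL_rep_iff)
  have "(snd (fst x) $ p 1 \<bullet> fst (fst x) $ p 3) * (snd (fst x) $ p 2 \<bullet> fst (snd x) $ q 4) *
      (cofactor_normal p (fst (fst x)) \<bullet> fst (fst x) $ p 4) \<noteq> 0" if x: "x \<in> FL_rep p q" for x
  proof -
    have "tetrahedron_of_flags (fst x)"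
      using x by (simp add: FL_rep_iff)
    then show ?thesis
      using glued_face_inner_opposite_nonzero(2)[OF p q x face_normal[OF x]]
        face_normal_inner_opposite_nonzero[OF _ p face_normal[OF x]]
        tetrahedron_inner_eq_0_iff permutes_eq_iff[OF p] by simp
  qed
  then have "continuous_on (FL_rep p q)
      (\<lambda>x. glue_ratio p (fst x) (cofactor_normal p (fst (fst x))) (fst (snd x) $ q 4))"
    unfolding glue_ratio_def Let_def by (intro continuous_intros) auto
  then show ?thesis
    by (rule continuous_on_eq) (simp add: gpar_eq_glue_ratio[OF _ p face_normal] FL_rep_iff)
qed

lemma continuous_map_gluing_param:
  assumes p: "p permutes UNIV" and q: "q permutes UNIV"
  shows "continuous_map (FLq p q) euclideanreal (gluing_param p q)"
  unfolding FLq_def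
proof (rule continuous_map_from_quotient_top)
  show "continuous_map (top_of_set (FL_rep p q)) euclideanreal (gpar p q)"
    using continuous_on_gpar[OF p q] by simp
qed (use equiv_FL_rel gluing_param_class[OF p] in auto)

section \<open>Matrices fixing the flags of a face\<close>

lemma proj_eq_glued_point_transition:
  assumes A: "invertible A"
    and "proj_eq v w" "proj_eq v' w'" "proj_eq v' (A *v v)" "proj_eq w' (B *v w)"
  shows "proj_eq ((matrix_inv A ** B) *v v) v"
proof -
  have "proj_eq (A *v v) (B *v v)"
    using proj_eq_trans[OF proj_eq_sym[OF assms(4)] proj_eq_trans[OF assms(3)
        proj_eq_trans[OF assms(5) proj_eq_sym[OF proj_eq_matrix_vector_mult[OF assms(2)]]]]] .
  then have "proj_eq (matrix_inv A *v (A *v v)) (matrix_inv A *v (B *v v))"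
    by (rule proj_eq_matrix_vector_mult)
  then show ?thesis
    by (simp add: matrix_vector_mul_assoc matrix_mul_matrix_inv[OF A] proj_eq_sym)
qed

lemma proj_eq_glued_plane_transition:
  assumes B: "invertible B"
    and "proj_eq h z" "proj_eq h' z'" "proj_eq h' (h v* matrix_inv A)" "proj_eq z' (z v* matrix_inv B)"
  shows "proj_eq (h v* (matrix_inv A ** B)) h"
proof -
  have "proj_eq (h v* matrix_inv A) (h v* matrix_inv B)"
    using proj_eq_trans[OF proj_eq_sym[OF assms(4)] proj_eq_trans[OF assms(3)
        proj_eq_trans[OF assms(5) proj_eq_sym[OF proj_eq_vector_matrix_mult[OF assms(2)]]]]] .
  then have "proj_eq ((h v* matrix_inv A) v* B) ((h v* matrix_inv B) v* B)"
    by (rule proj_eq_vector_matrix_mult)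
  then show ?thesis
    by (simp add: vector_matrix_mul_assoc matrix_mul_matrix_inv[OF B])
qed

lemma glued_pgl_act_fixes_face:
  assumes A: "invertible A" and B: "invertible B"
    and glued: "glued p q F E" "glued p q F' E'"
    and F': "same_flags F' (pgl_act A F)" and E': "same_flags E' (pgl_act B E)"
    and n: "n \<in> {1, 2, 3}"
  shows "proj_eq ((matrix_inv A ** B) *v fst F $ p n) (fst F $ p n)"
    "proj_eq (snd F $ p n v* (matrix_inv A ** B)) (snd F $ p n)"
proof -
  obtain n' where n': "proj_eq (fst F $ p n) (fst E $ q n')" "proj_eq (snd F $ p n) (snd E $ q n')"
    "proj_eq (fst F' $ p n) (fst E' $ q n')" "proj_eq (snd F' $ p n) (snd E' $ q n')"
    using n glued unfolding glued_def by auto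
  have "proj_eq (fst F' $ p n) (A *v fst F $ p n)" "proj_eq (snd F' $ p n) (snd F $ p n v* matrix_inv A)"
    "proj_eq (fst E' $ q n') (B *v fst E $ q n')" "proj_eq (snd E' $ q n') (snd E $ q n' v* matrix_inv B)"
    using F' E' unfolding same_flags_pgl_act_iff by blast+
  then show "proj_eq ((matrix_inv A ** B) *v fst F $ p n) (fst F $ p n)"
    "proj_eq (snd F $ p n v* (matrix_inv A ** B)) (snd F $ p n)"
    using proj_eq_glued_point_transition[OF A n'(1,3)] proj_eq_glued_plane_transition[OF B n'(2,4)] by blast+
qed

text \<open>The eigenvalues agree because the matrix preserves the nonzero pairings between the point of
  one flag and the plane of another.\<close>
lemma face_flags_common_eigenvalue:
  assumes T: "tetrahedron_of_flags T" and p: "p permutes UNIV"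
    and fixed: "\<And>n. n \<in> {1, 2, 3} \<Longrightarrow>
      proj_eq (C *v fst T $ p n) (fst T $ p n) \<and> proj_eq (snd T $ p n v* C) (snd T $ p n)"
  obtains c where "c \<noteq> 0"
    "\<And>n. n \<in> {1, 2, 3} \<Longrightarrow> C *v fst T $ p n = c *\<^sub>R fst T $ p n \<and> snd T $ p n v* C = c *\<^sub>R snd T $ p n"
proof -
  have "\<forall>n\<in>{1, 2, 3}. \<exists>a. a \<noteq> 0 \<and> C *v fst T $ p n = a *\<^sub>R fst T $ p n"
    "\<forall>n\<in>{1, 2, 3}. \<exists>b. b \<noteq> 0 \<and> snd T $ p n v* C = b *\<^sub>R snd T $ p n"
    using fixed unfolding proj_eq_def by blast+
  then obtain a b where
    a: "\<forall>n\<in>{1, 2, 3}. a n \<noteq> 0 \<and> C *v fst T $ p n = a n *\<^sub>R fst T $ p n" and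
    b: "\<forall>n\<in>{1, 2, 3}. b n \<noteq> 0 \<and> snd T $ p n v* C = b n *\<^sub>R snd T $ p n"
    by metis
  have pairing: "b i = a j" if "i \<in> {1, 2, 3}" "j \<in> {1, 2, 3}" "i \<noteq> j" for i j
  proof -
    have "(snd T $ p i v* C) \<bullet> fst T $ p j = snd T $ p i \<bullet> (C *v fst T $ p j)"
      by (rule dot_lmul_matrix)
    moreover have "C *v fst T $ p j = a j *\<^sub>R fst T $ p j" "snd T $ p i v* C = b i *\<^sub>R snd T $ p i"
      using a b that(1,2) by blast+
    ultimately have "b i * (snd T $ p i \<bullet> fst T $ p j) = a j * (snd T $ p i \<bullet> fst T $ p j)"
      by simp
    moreover have "snd T $ p i \<bullet> fst T $ p j \<noteq> 0"
      using that tetrahedron_inner_eq_0_iff[OF T] permutes_eq_iff[OF p] by simp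
    ultimately show ?thesis
      by simp
  qed
  have "b 1 = a 2" "b 1 = a 3" "b 2 = a 1" "b 2 = a 3" "b 3 = a 1"
    by (rule pairing; simp)+
  then have same: "a n = a 1 \<and> b n = a 1" if "n \<in> {1, 2, 3}" for n
    using that by auto
  show ?thesis
  proof (rule that)
    show "a 1 \<noteq> 0"
      using a by simp
    fix n :: 4
    assume n: "n \<in> {1, 2, 3}"
    then have "C *v fst T $ p n = a n *\<^sub>R fst T $ p n" "snd T $ p n v* C = b n *\<^sub>R snd T $ p n"
      using a b by blast+
    then show "C *v fst T $ p n = a 1 *\<^sub>R fst T $ p n \<and> snd T $ p n v* C = a 1 *\<^sub>R snd T $ p n"
      using same[OF n] by simp
  qed
qed

lemma scalar_matrix_if_fixes_face_planes:
  assumes T: "tetrahedron_of_flags T" and p: "p permutes UNIV" and N: "face_normal p (fst T) N"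
    and "N v* C = c *\<^sub>R N" and "\<And>n. n \<in> {1, 2, 3} \<Longrightarrow> snd T $ p n v* C = c *\<^sub>R snd T $ p n"
  shows "C = c *\<^sub>R mat 1"
proof -
  have "C *v u - c *\<^sub>R u = 0" for u
  proof (rule face_dual_annihilator_eq_0[OF T p N])
    show "N \<bullet> (C *v u - c *\<^sub>R u) = 0" "snd T $ p 1 \<bullet> (C *v u - c *\<^sub>R u) = 0"
      "snd T $ p 2 \<bullet> (C *v u - c *\<^sub>R u) = 0" "snd T $ p 3 \<bullet> (C *v u - c *\<^sub>R u) = 0"
      using assms(4,5) by (simp_all add: inner_diff_right dot_lmul_matrix[symmetric])
  qed
  then show ?thesis
    unfolding matrix_eq by (simp add: scaleR_matrix_vector_assoc[symmetric])
qed

lemma glue_ratio_eigencovectors: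
  assumes "N v* C = r *\<^sub>R N" "snd F $ p 2 v* C = c *\<^sub>R snd F $ p 2" "c \<noteq> 0"
  shows "glue_ratio p F N (C *v U) = (r / c) * glue_ratio p F N U"
proof -
  have "N \<bullet> (C *v U) = r * (N \<bullet> U)" "snd F $ p 2 \<bullet> (C *v U) = c * (snd F $ p 2 \<bullet> U)"
    using assms(1,2) by (simp_all add: dot_lmul_matrix[symmetric])
  moreover have "- (x1 * x2 * (r * x3)) / (y1 * (c * y2) * y3) = (r / c) * (- (x1 * x2 * x3) / (y1 * y2 * y3))"
    for x1 x2 x3 y1 y2 y3 :: real
    by (simp add: times_divide_times_eq ac_simps)
  ultimately show ?thesis
    by (simp add: glue_ratio_def Let_def)
qed

lemma same_flags_pgl_act_scaleR:
  assumes A: "invertible A" and c: "c \<noteq> 0" and T': "same_flags T' (pgl_act (c *\<^sub>R A) T)"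
  shows "same_flags T' (pgl_act A T)"
  unfolding same_flags_pgl_act_iff
proof
  fix m
  have "matrix_inv (c *\<^sub>R A) = (1 / c) *\<^sub>R matrix_inv A"
    by (rule matrix_inv_unique) (simp_all add: matrix_scalar_ac matrix_mul_matrix_inv[OF A] c)
  then have "proj_eq (fst T' $ m) (c *\<^sub>R (A *v fst T $ m))"
    "proj_eq (snd T' $ m) ((1 / c) *\<^sub>R (snd T $ m v* matrix_inv A))"
    using T' unfolding same_flags_pgl_act_iff by (simp_all add: scaleR_matrix_vector_assoc vector_scaleR_matrix_ac)
  moreover have "1 / c \<noteq> 0"
    using c by simp
  ultimately show "proj_eq (fst T' $ m) (A *v fst T $ m) \<and> proj_eq (snd T' $ m) (snd T $ m v* matrix_inv A)"
    using proj_eq_trans proj_eq_scaleR c by blast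
qed

text \<open>The matrices fixing the three flags of a face are, up to scale, the homologies with the plane
  of the face as axis; the gluing ratio detects their ratio, so a stabilizer preserving it is scalar.\<close>
lemma face_flags_stabilizer_scalar:
  assumes T: "tetrahedron_of_flags T" and p: "p permutes UNIV" and N: "face_normal p (fst T) N"
    and fixed: "\<And>n. n \<in> {1, 2, 3} \<Longrightarrow>
      proj_eq (C *v fst T $ p n) (fst T $ p n) \<and> proj_eq (snd T $ p n v* C) (snd T $ p n)"
    and ratio: "glue_ratio p T N (C *v U) = glue_ratio p T N U" "glue_ratio p T N U \<noteq> 0"
  obtains c where "c \<noteq> 0" "C = c *\<^sub>R mat 1"
proof -
  obtain c where c: "c \<noteq> 0" "\<And>n. n \<in> {1, 2, 3} \<Longrightarrow>
      C *v fst T $ p n = c *\<^sub>R fst T $ p n \<and> snd T $ p n v* C = c *\<^sub>R snd T $ p n"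
    using face_flags_common_eigenvalue[OF T p fixed] by blast
  define r where "r = (N v* C) \<bullet> fst T $ p 4 / (N \<bullet> fst T $ p 4)"
  have NC: "N v* C = r *\<^sub>R N"
    unfolding r_def using c N
    by (intro face_normal_proportional[OF T p N]) (simp_all add: dot_lmul_matrix face_normal_def)
  have "glue_ratio p T N (C *v U) = (r / c) * glue_ratio p T N U"
    using glue_ratio_eigencovectors[OF NC _ c(1)] c(2)[of 2] by simp
  then have "r = c"
    using ratio c(1) by (auto simp: field_simps)
  then have "C = c *\<^sub>R mat 1"
    using scalar_matrix_if_fixes_face_planes[OF T p N NC] c(2) by simp
  then show ?thesis
    using that c(1) by blast
qed

lemma pgl_equiv2_if_gpar_eq:
  assumes p: "p permutes UNIV" and q: "q permutes UNIV" and x: "x \<in> FL_rep p q" and y: "y \<in> FL_rep p q"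
    and "pgl_equiv (fst x) (fst y)" "pgl_equiv (snd x) (snd y)" and gpar: "gpar p q x = gpar p q y"
  shows "pgl_equiv2 x y"
proof -
  obtain A where A: "invertible A" "same_flags (fst y) (pgl_act A (fst x))"
    using \<open>pgl_equiv (fst x) (fst y)\<close> unfolding pgl_equiv_def by blast
  obtain B where B: "invertible B" "same_flags (snd y) (pgl_act B (snd x))"
    using \<open>pgl_equiv (snd x) (snd y)\<close> unfolding pgl_equiv_def by blast
  define C where "C = matrix_inv A ** B"
  have B_eq: "B = A ** C"
    by (simp add: C_def matrix_mul_assoc matrix_mul_matrix_inv[OF A(1)])
  have T: "tetrahedron_of_flags (fst x)" and glued: "glued p q (fst x) (snd x)" "glued p q (fst y) (snd y)"
    using x y by (simp_all add: FL_rep_iff)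
  define N where "N = face_plane p (fst x)"
  have N: "face_normal p (fst (fst x)) N"
    unfolding N_def by (rule face_normal_face_plane)
  obtain e e' where e: "\<And>m. e m \<noteq> 0" "\<And>m. e' m \<noteq> 0"
    "\<And>m. fst (snd y) $ m = e m *\<^sub>R (B *v fst (snd x) $ m)"
    "\<And>m. snd (snd y) $ m = e' m *\<^sub>R (snd (snd x) $ m v* matrix_inv B)"
    using same_flags_pgl_actE[OF B(2)] by blast
  have "glue_ratio p (fst x) N (C *v fst (snd x) $ q 4)
      = glue_ratio p (fst y) (N v* matrix_inv A) (e (q 4) *\<^sub>R (A *v (C *v fst (snd x) $ q 4)))"
    by (rule glue_ratio_pgl_act[OF A e(1), symmetric])
  also have "\<dots> = gpar p q y"
    using gpar_eq_glue_ratio[OF _ p face_normal_pgl_act[OF A N]] y e(3)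
    by (simp add: FL_rep_iff B_eq matrix_vector_mul_assoc)
  also have "\<dots> = glue_ratio p (fst x) N (fst (snd x) $ q 4)"
    using gpar gpar_eq_glue_ratio[OF T p N] by simp
  finally obtain c where c: "c \<noteq> 0" "C = c *\<^sub>R mat 1"
    using face_flags_stabilizer_scalar[OF T p N] glued_pgl_act_fixes_face[OF A(1) B(1) glued A(2) B(2)]
      gpar_nonzero[OF p q x] gpar_eq_glue_ratio[OF T p N] unfolding C_def by metis
  then have "same_flags (snd y) (pgl_act (c *\<^sub>R A) (snd x))"
    using B(2) by (simp add: B_eq matrix_scalar_ac)
  then show ?thesis
    using A same_flags_pgl_act_scaleR[OF A(1) c(1)] unfolding pgl_equiv2_def by blast
qed

section \<open>Homologies and a section of the gluing parameter\<close>

text \<open>For \<open>N \<bullet> P \<noteq> 0\<close> this is the homology with axis the hyperplane \<open>N\<close>, centre \<open>P\<close> and ratio \<open>d\<close>.\<close>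
definition homology_mat :: "real^'n \<Rightarrow> real^'n \<Rightarrow> real \<Rightarrow> real^'n^'n" where
  "homology_mat N P d = mat 1 + ((d - 1) / (N \<bullet> P)) *\<^sub>R (\<chi> i j. P $ i * N $ j)"

lemma homology_mat_vector: "homology_mat N P d *v u = u + ((d - 1) * (N \<bullet> u) / (N \<bullet> P)) *\<^sub>R P"
  by (simp add: homology_mat_def matrix_vector_mult_add_rdistrib scaleR_matrix_vector_assoc[symmetric])
    (simp add: vec_eq_iff matrix_vector_mult_def inner_vec_def sum_distrib_left sum_distrib_right mult_ac)

lemma vector_homology_mat: "z v* homology_mat N P d = z + ((d - 1) * (z \<bullet> P) / (N \<bullet> P)) *\<^sub>R N"
  by (simp add: homology_mat_def vector_matrix_mult_add_rdistrib vector_scaleR_matrix_ac)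
    (simp add: vec_eq_iff vector_matrix_mult_def inner_vec_def sum_distrib_left sum_distrib_right mult_ac)

lemma homology_mat_mult:
  assumes "N \<bullet> P \<noteq> 0"
  shows "homology_mat N P d ** homology_mat N P e = homology_mat N P (d * e)"
  unfolding matrix_eq
proof
  fix u
  define a where "a = (e - 1) * (N \<bullet> u) / (N \<bullet> P)"
  have "(homology_mat N P d ** homology_mat N P e) *v u
      = u + (a + (d - 1) * (N \<bullet> u + a * (N \<bullet> P)) / (N \<bullet> P)) *\<^sub>R P"
    by (simp add: matrix_vector_mul_assoc[symmetric] homology_mat_vector inner_add_right scaleR_add_left a_def)
  also have "a + (d - 1) * (N \<bullet> u + a * (N \<bullet> P)) / (N \<bullet> P) = (d * e - 1) * (N \<bullet> u) / (N \<bullet> P)"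
    using assms by (simp add: a_def field_simps)
  finally show "(homology_mat N P d ** homology_mat N P e) *v u = homology_mat N P (d * e) *v u"
    by (simp add: homology_mat_vector)
qed

lemma homology_mat_1: "homology_mat N P 1 = mat 1"
  by (simp add: homology_mat_def)

lemma
  assumes "d \<noteq> 0" "N \<bullet> P \<noteq> 0"
  shows invertible_homology_mat: "invertible (homology_mat N P d)"
    and matrix_inv_homology_mat: "matrix_inv (homology_mat N P d) = homology_mat N P (1 / d)"
proof -
  have "homology_mat N P d ** homology_mat N P (1 / d) = mat 1"
    "homology_mat N P (1 / d) ** homology_mat N P d = mat 1"
    using assms by (simp_all add: homology_mat_mult homology_mat_1)
  then show "invertible (homology_mat N P d)" "matrix_inv (homology_mat N P d) = homology_mat N P (1 / d)"
    unfolding invertible_def by (auto intro: matrix_inv_unique)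
qed

definition face_point :: "(4 \<Rightarrow> 4) \<Rightarrow> tet \<Rightarrow> real^4" where
  "face_point p F = plane_cov (snd F $ p 1) (snd F $ p 2) (snd F $ p 3)"

lemma inner_face_point_eq_0: "n \<in> {1, 2, 3} \<Longrightarrow> snd F $ p n \<bullet> face_point p F = 0"
  using plane_cov_orthogonal unfolding face_point_def by (auto simp: inner_commute)

lemma face_normal_inner_face_point_nonzero:
  assumes T: "tetrahedron_of_flags F" and p: "p permutes UNIV" and N: "face_normal p (fst F) N"
  shows "N \<bullet> face_point p F \<noteq> 0"
proof
  assume "N \<bullet> face_point p F = 0"
  then have "face_point p F = 0"
    using inner_face_point_eq_0 by (intro face_dual_annihilator_eq_0[OF T p N]) auto
  then show False
    using plane_cov_orthogonal unfolding face_point_def by simp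
qed

text \<open>Applied to the second tetrahedron, this homology fixes the three shared flags (their points lie on
  the axis and their planes contain the centre) and multiplies the gluing parameter by \<open>d\<close>.\<close>
definition gluing_section :: "(4 \<Rightarrow> 4) \<Rightarrow> tet \<Rightarrow> tet \<Rightarrow> real \<Rightarrow> tet \<times> tet" where
  "gluing_section p F E d = (F, pgl_act (homology_mat (face_plane p F) (face_point p F) d) E)"

lemma fst_gluing_section: "fst (gluing_section p F E d) = F"
  by (simp add: gluing_section_def)

context
  fixes p q :: "4 \<Rightarrow> 4" and F E :: tet
  assumes p: "p permutes UNIV" and q: "q permutes UNIV" and FE: "(F, E) \<in> FL_rep p q"
begin

private abbreviation "N \<equiv> face_plane p F"
private abbreviation "P \<equiv> face_point p F"

private lemma F: "tetrahedron_of_flags F" and E: "tetrahedron_of_flags E" and glued: "glued p q F E"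
  using FE by (simp_all add: FL_rep_iff)

private lemma face_normal_N: "face_normal p (fst F) N"
  by (rule face_normal_face_plane)

private lemma N_P: "N \<bullet> P \<noteq> 0"
  by (rule face_normal_inner_face_point_nonzero[OF F p face_normal_N])

lemma gluing_section_fixes_face:
  assumes "d \<noteq> 0" "n \<in> {1, 2, 3}"
  shows "fst (snd (gluing_section p F E d)) $ q n = fst E $ q n"
    "snd (snd (gluing_section p F E d)) $ q n = snd E $ q n"
proof -
  obtain m where m: "m \<in> {1, 2, 3}" "proj_eq (fst F $ p m) (fst E $ q n)" "proj_eq (snd F $ p m) (snd E $ q n)"
    using assms(2) glued unfolding glued_def by auto
  have "N \<bullet> fst E $ q n = 0"
    using face_normal_N m(1) proj_eq_inner_right_eq_0[OF m(2)] unfolding face_normal_def by auto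
  then show "fst (snd (gluing_section p F E d)) $ q n = fst E $ q n"
    by (simp add: gluing_section_def pgl_act_def homology_mat_vector)
  have "snd E $ q n \<bullet> P = 0"
    using inner_face_point_eq_0[of m F p] m(1) proj_eq_inner_left_eq_0[OF m(3)] by simp
  then show "snd (snd (gluing_section p F E d)) $ q n = snd E $ q n"
    using assms(1) N_P by (simp add: gluing_section_def pgl_act_def matrix_inv_homology_mat vector_homology_mat)
qed

lemma pgl_equiv_gluing_section: "d \<noteq> 0 \<Longrightarrow> pgl_equiv E (snd (gluing_section p F E d))"
  unfolding pgl_equiv_def gluing_section_def
  by (intro exI[of _ "homology_mat N P d"]) (simp add: invertible_homology_mat N_P same_flags_refl)

lemma gluing_section_in_FL_rep:
  assumes "d \<noteq> 0"
  shows "gluing_section p F E d \<in> FL_rep p q"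
proof -
  have "tetrahedron_of_flags (snd (gluing_section p F E d))"
    using tetrahedron_of_flags_pgl_equiv[OF E pgl_equiv_gluing_section[OF assms]] .
  moreover have "glued p q F (snd (gluing_section p F E d))"
    using glued gluing_section_fixes_face[OF assms] unfolding glued_def by simp
  ultimately show ?thesis
    using F by (simp add: FL_rep_iff fst_gluing_section)
qed

lemma gpar_gluing_section:
  assumes "d \<noteq> 0"
  shows "gpar p q (gluing_section p F E d) = d * gpar p q (F, E)"
proof -
  have "N v* homology_mat N P d = N + ((d - 1) * (N \<bullet> P) / (N \<bullet> P)) *\<^sub>R N"
    by (simp only: vector_homology_mat)
  also have "\<dots> = d *\<^sub>R N"
    using N_P by (simp add: scaleR_diff_left)
  finally have "N v* homology_mat N P d = d *\<^sub>R N" .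
  moreover have "snd F $ p 2 v* homology_mat N P d = 1 *\<^sub>R snd F $ p 2"
    using inner_face_point_eq_0[of 2 F p] by (simp add: vector_homology_mat)
  ultimately have "glue_ratio p F N (homology_mat N P d *v fst E $ q 4) = d * glue_ratio p F N (fst E $ q 4)"
    using glue_ratio_eigencovectors[of N "homology_mat N P d" d F p 1 "fst E $ q 4"] by simp
  then show ?thesis
    using gpar_eq_glue_ratio[OF _ p] F face_normal_N
    by (simp add: gluing_section_def pgl_act_def)
qed

lemma continuous_on_gluing_section: "continuous_on (- {0}) (gluing_section p F E)"
proof -
  have "continuous_on (- {0}) (\<lambda>d. (F,
      (\<chi> m. fst E $ m + ((d - 1) * (N \<bullet> fst E $ m) / (N \<bullet> P)) *\<^sub>R P),
      (\<chi> m. snd E $ m + ((1 / d - 1) * (snd E $ m \<bullet> P) / (N \<bullet> P)) *\<^sub>R N)))"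
    using N_P by (intro continuous_intros) auto
  then show ?thesis
    by (rule continuous_on_eq) (simp add: gluing_section_def pgl_act_def homology_mat_vector
        vector_homology_mat matrix_inv_homology_mat N_P)
qed

end

section \<open>The gluing parameter on a pair of classes\<close>

lemma Gset_cong: "pgl_equiv F F0 \<Longrightarrow> pgl_equiv E E0 \<Longrightarrow> Gset p q F E = Gset p q F0 E0"
  unfolding Gset_def by (meson pgl_equiv_sym pgl_equiv_trans)

lemma GsetE:
  assumes "c \<in> Gset p q F E"
  obtains x where "x \<in> FL_rep p q" "c = FL_rel p q `` {x}" "pgl_equiv F (fst x)" "pgl_equiv E (snd x)"
  using assms quotient_class_eq[OF equiv_FL_rel] in_quotient_imp_subset[OF equiv_FL_rel]
  unfolding Gset_def by blast

lemma gluing_param_Gset_nonzero: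
  assumes p: "p permutes UNIV" and q: "q permutes UNIV" and "c \<in> Gset p q F E"
  shows "gluing_param p q c \<noteq> 0"
proof -
  obtain x where "x \<in> FL_rep p q" "c = FL_rel p q `` {x}"
    using GsetE[OF \<open>c \<in> Gset p q F E\<close>] by blast
  then show ?thesis
    using gluing_param_class[OF p] gpar_nonzero[OF p q] by simp
qed

context
  fixes p q :: "4 \<Rightarrow> 4" and F E :: tet
  assumes p: "p permutes UNIV" and q: "q permutes UNIV" and FE: "(F, E) \<in> FL_rep p q"
begin

private definition section_class :: "real \<Rightarrow> (tet \<times> tet) set" where
  "section_class r = FL_rel p q `` {gluing_section p F E (r / gpar p q (F, E))}"

private lemma section_in_FL_rep: "r \<noteq> 0 \<Longrightarrow> gluing_section p F E (r / gpar p q (F, E)) \<in> FL_rep p q"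
  using gluing_section_in_FL_rep[OF p q FE] gpar_nonzero[OF p q FE] by simp

private lemma gluing_param_section_class: "r \<noteq> 0 \<Longrightarrow> gluing_param p q (section_class r) = r"
  using gpar_gluing_section[OF p q FE] gpar_nonzero[OF p q FE]
  by (simp add: section_class_def gluing_param_class[OF p section_in_FL_rep])

private lemma section_class_in_Gset:
  assumes "r \<noteq> 0"
  shows "section_class r \<in> Gset p q F E"
proof -
  define y where "y = gluing_section p F E (r / gpar p q (F, E))"
  have y: "y \<in> FL_rep p q"
    unfolding y_def by (rule section_in_FL_rep[OF assms])
  have "pgl_equiv F (fst y)" "pgl_equiv E (snd y)"
    using pgl_equiv_gluing_section[OF p q FE] gpar_nonzero[OF p q FE] assms
    by (simp_all add: y_def fst_gluing_section pgl_equiv_refl)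
  then show ?thesis
    unfolding section_class_def Gset_def y_def[symmetric]
    by (intro CollectI conjI bexI[of _ y] quotientI y equiv_class_self[OF equiv_FL_rel y])
qed

private lemma section_class_gluing_param:
  assumes "c \<in> Gset p q F E"
  shows "section_class (gluing_param p q c) = c"
proof -
  obtain x where x: "x \<in> FL_rep p q" "c = FL_rel p q `` {x}" "pgl_equiv F (fst x)" "pgl_equiv E (snd x)"
    using assms by (rule GsetE)
  define y where "y = gluing_section p F E (gpar p q x / gpar p q (F, E))"
  have r: "gpar p q x \<noteq> 0"
    by (rule gpar_nonzero[OF p q x(1)])
  have "pgl_equiv2 x y"
  proof (rule pgl_equiv2_if_gpar_eq[OF p q x(1)])
    show "y \<in> FL_rep p q"
      unfolding y_def by (rule section_in_FL_rep[OF r])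
    show "pgl_equiv (fst x) (fst y)" "pgl_equiv (snd x) (snd y)"
      using x(3,4) pgl_equiv_gluing_section[OF p q FE] gpar_nonzero[OF p q FE] r
      by (auto simp: y_def fst_gluing_section intro: pgl_equiv_trans pgl_equiv_sym)
    show "gpar p q x = gpar p q y"
      using gpar_gluing_section[OF p q FE] gpar_nonzero[OF p q FE] r by (simp add: y_def)
  qed
  then have "FL_rel p q `` {x} = FL_rel p q `` {y}"
    using x(1) section_in_FL_rep[OF r] by (intro equiv_class_eq[OF equiv_FL_rel]) (simp add: FL_rel_def y_def)
  moreover have "gluing_param p q c = gpar p q x"
    by (simp add: x(2) gluing_param_class[OF p x(1)])
  ultimately show ?thesis
    by (simp add: section_class_def x(2) y_def)
qed

private lemma continuous_map_section_class:
  "continuous_map (top_of_set (- {0})) (subtopology (FLq p q) (Gset p q F E)) section_class"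
proof -
  have g0: "gpar p q (F, E) \<noteq> 0"
    by (rule gpar_nonzero[OF p q FE])
  have "continuous_on (- {0}) (\<lambda>r. r / gpar p q (F, E))"
    using g0 by (intro continuous_intros) auto
  moreover have "(\<lambda>r. r / gpar p q (F, E)) ` (- {0}) \<subseteq> - {0}"
    using g0 by auto
  ultimately have "continuous_on (- {0}) (\<lambda>r. gluing_section p F E (r / gpar p q (F, E)))"
    by (rule continuous_on_compose2[OF continuous_on_gluing_section[OF p q FE]])
  then have "continuous_map (top_of_set (- {0})) (top_of_set (FL_rep p q))
      (\<lambda>r. gluing_section p F E (r / gpar p q (F, E)))"
    using section_in_FL_rep by (intro continuous_map_into_subtopology) auto
  moreover have "continuous_map (top_of_set (FL_rep p q)) (FLq p q) (\<lambda>x. FL_rel p q `` {x})"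
    unfolding FLq_def by (rule continuous_map_quotient_class) (simp add: equiv_FL_rel)
  ultimately have "continuous_map (top_of_set (- {0})) (FLq p q) section_class"
    unfolding section_class_def by (rule continuous_map_compose[unfolded comp_def])
  then show ?thesis
    by (rule continuous_map_into_subtopology) (use section_class_in_Gset in auto)
qed

lemma homeomorphic_map_gluing_param_Gset:
  "homeomorphic_map (subtopology (FLq p q) (Gset p q F E)) (top_of_set (- {0})) (gluing_param p q)"
  unfolding homeomorphic_map_maps homeomorphic_maps_def
proof (intro exI[of _ section_class] conjI ballI)
  have G: "Gset p q F E \<subseteq> topspace (FLq p q)"
    by (auto simp: Gset_def topspace_FLq)
  show "continuous_map (subtopology (FLq p q) (Gset p q F E)) (top_of_set (- {0})) (gluing_param p q)"
  proof (rule continuous_map_into_subtopology)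
    show "continuous_map (subtopology (FLq p q) (Gset p q F E)) euclideanreal (gluing_param p q)"
      by (rule continuous_map_from_subtopology[OF continuous_map_gluing_param[OF p q]])
    show "gluing_param p q \<in> topspace (subtopology (FLq p q) (Gset p q F E)) \<rightarrow> - {0}"
      using gluing_param_Gset_nonzero[OF p q, of _ F E] by auto
  qed
  show "continuous_map (top_of_set (- {0})) (subtopology (FLq p q) (Gset p q F E)) section_class"
    by (rule continuous_map_section_class)
  show "section_class (gluing_param p q c) = c" if "c \<in> topspace (subtopology (FLq p q) (Gset p q F E))" for c
    using that section_class_gluing_param G by auto
  show "gluing_param p q (section_class r) = r" if "r \<in> topspace (top_of_set (- {0::real}))" for r
    using that gluing_param_section_class by simp
qed

end

theorem lemma3p2:
  fixes p q :: "4 \<Rightarrow> 4" and F E :: tet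
  assumes "edge_face p" and "edge_face q"
    and "tetrahedron_of_flags F" and "tetrahedron_of_flags E"
    and "\<exists>F' E'. pgl_equiv F F' \<and> pgl_equiv E E' \<and> glued p q F' E'"
  shows "homeomorphic_map (subtopology (FLq p q) (Gset p q F E))
           (subtopology euclideanreal (- {0})) (gluing_param p q)"
proof -
  have p: "p permutes UNIV" and q: "q permutes UNIV"
    using assms(1,2) by (simp_all add: edge_face_def)
  obtain F0 E0 where equiv: "pgl_equiv F F0" "pgl_equiv E E0" and glued: "glued p q F0 E0"
    using assms(5) by blast
  have "(F0, E0) \<in> FL_rep p q"
    using tetrahedron_of_flags_pgl_equiv[OF assms(3) equiv(1)]
      tetrahedron_of_flags_pgl_equiv[OF assms(4) equiv(2)] glued
    by (simp add: FL_rep_iff)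
  moreover have "Gset p q F E = Gset p q F0 E0"
    by (rule Gset_cong[OF equiv])
  ultimately show ?thesis
    using homeomorphic_map_gluing_param_Gset[OF p q] by simp
qed

end
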